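(* Let $f,g:\mathbb{R}\to\mathbb{R}$ be nonrandom continuous functions with $|f(u)|,|g(u)|\le1$ for all $u\in\mathbb{R}$, and let $\{\xi_n\}_{n\ge1}$ be random variables satisfying the noise assumption below. Suppose that $$\sup_{u\in\mathbb{R}\setminus\{0\}}\left\{\frac{2f(u)}{g^2(u)}\right\}=\beta<1,$$ where, at points $u\neq0$ with $g(u)=0$, this condition is understood to hold at $u$ if and only if $f(u)<0$ (so no restriction on $g$ is imposed when $f(u)<0$ for all $u\ne 0$). Then there exists $h_0>0$ such that for every $h\in(0,h_0)$ and every nonrandom $x_0\in\mathbb{R}$, the solution of $$x_{n+1}=x_n\big(1+hf(x_n)+\sqrt{h}\,g(x_n)\xi_{n+1}\big),\quad n=0,1,\dots,$$ satisfies $\lim_{n\to\infty}x_n=0$ almost surely.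
   Context: Noise assumption (Assumption 1): the $\xi_n$ are independent with $\mathbf{E}\xi_n=0$, $\mathbf{E}\xi_n^2=1$, $\mathbf{E}|\xi_n|^3$ uniformly bounded in $n$; each $\xi_n$ has a probability density $p_n$, and $x^3p_n(x)\to0$ as $|x|\to\infty$ uniformly in $n$. *)

theory Defs
  imports "HOL-Probability.Probability"
begin

fun xseq :: "(real \<Rightarrow> real) \<Rightarrow> (real \<Rightarrow> real) \<Rightarrow> (nat \<Rightarrow> 'a \<Rightarrow> real)
              \<Rightarrow> real \<Rightarrow> real \<Rightarrow> nat \<Rightarrow> 'a \<Rightarrow> real" where
  "xseq f g \<xi> h x0 0 \<omega> = x0"
| "xseq f g \<xi> h x0 (Suc n) \<omega> =
     xseq f g \<xi> h x0 n \<omega> * (1 + h * f (xseq f g \<xi> h x0 n \<omega>)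
        + sqrt h * g (xseq f g \<xi> h x0 n \<omega>) * \<xi> (Suc n) \<omega>)"

end

theory Submission
  imports Defs
begin

text \<open>
  The proof is a stochastic Lyapunov argument for \<open>V(x) = |x| powr \<delta>\<close> with
  \<open>\<delta> = (1 - max \<beta> 0) / 2\<close>. A third-order Taylor expansion of \<open>|1 + e| powr \<delta>\<close>, combined with
  \<open>E \<xi> = 0\<close>, \<open>E \<xi>\<^sup>2 = 1\<close> and the bound on \<open>E |\<xi>|\<^sup>3\<close>, shows that for small \<open>h\<close> one step of the
  scheme satisfies \<open>E V(x\<^sub>n\<^sub>+\<^sub>1) \<le> V(x\<^sub>n) (1 - \<phi>(x\<^sub>n))\<close>, where
  \<open>\<phi>(u) = h \<delta>\<^sup>2 / 6 (|f u| + g(u)\<^sup>2)\<close> is positive for \<open>u \<noteq> 0\<close>.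
  So \<open>V(x\<^sub>n)\<close> is a nonnegative supermartingale with summable expected decrements
  \<open>V(x\<^sub>n) \<phi>(x\<^sub>n)\<close>, which therefore tend to 0 almost surely. Doob's maximal inequality shows
  that \<open>V(x\<^sub>n)\<close> stays bounded and that, once \<open>V(x\<^sub>n) \<le> \<eta>\<close>, it later exceeds \<open>c\<close> only with
  probability at most \<open>\<eta> / c\<close>. A path not converging to 0 would thus remain in a compact annulus
  around 0 on which \<open>\<phi>\<close> is bounded below, contradicting \<open>V(x\<^sub>n) \<phi>(x\<^sub>n) \<rightarrow> 0\<close>.
\<close>

lemma powr_third_derivative_bound:
  fixes d t :: real
  assumes d: "0 < d" "d \<le> 1/2" and t: "\<bar>t\<bar> \<le> 1/2"
  shows "\<bar>d * (d - 1) * (d - 2) * (1 + t) powr (d - 3)\<bar> \<le> 16"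
proof -
  have "\<bar>d * (d - 1) * (d - 2)\<bar> = d * (1 - d) * (2 - d)"
    using d by (simp add: abs_mult)
  also have "\<dots> \<le> 1 * 1 * 2"
    using d by (intro mult_mono) auto
  finally have coeff: "\<bar>d * (d - 1) * (d - 2)\<bar> \<le> 2" by simp
  have "(1 + t) powr (d - 3) \<le> (1/2) powr (d - 3)"
    using t d by (intro powr_mono2') auto
  also have "\<dots> \<le> (1/2) powr (- 3)"
    using d by (intro powr_mono') auto
  finally have "(1 + t) powr (d - 3) \<le> 8"
    by (simp add: powr_minus_divide powr_realpow power_divide)
  then have "\<bar>d * (d - 1) * (d - 2)\<bar> * (1 + t) powr (d - 3) \<le> 2 * 8"
    using coeff by (intro mult_mono) auto
  then show ?thesis
    by (simp add: abs_mult)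
qed

lemma has_real_derivative_const_mult_powr_shift:
  fixes c p t :: real
  assumes "-1 < t"
  shows "((\<lambda>t. c * (1 + t) powr p) has_real_derivative c * (p * (1 + t) powr (p - 1))) (at t)"
proof -
  have "((\<lambda>t. (1 + t) powr p) has_real_derivative p * (1 + t) powr (p - 1) * 1) (at t)"
    using assms by (intro DERIV_fun_powr derivative_eq_intros) auto
  then show ?thesis
    using DERIV_cmult by fastforce
qed

lemma powr_one_plus_le_taylor:
  fixes d e :: real
  assumes d: "0 < d" "d \<le> 1/2" and e: "\<bar>e\<bar> \<le> 1/2"
  shows "(1 + e) powr d \<le> 1 + d * e - d * (1 - d) / 2 * e\<^sup>2 + 3 * \<bar>e\<bar> ^ 3"
proof (cases "e = 0")
  case True
  then show ?thesis by simp
next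
  case False
  define D where "D m t = (\<Prod>j<m. d - real j) * (1 + t) powr (d - real m)" for m t
  have D_deriv: "(D m has_real_derivative D (Suc m) t) (at t)"
    if "m < 3" "-1/2 \<le> t" "t \<le> 1/2" for m t
  proof -
    have "D (Suc m) t = (\<Prod>j<m. d - real j) * ((d - real m) * (1 + t) powr (d - real m - 1))"
      by (simp add: D_def algebra_simps)
    moreover have "D m = (\<lambda>t. (\<Prod>j<m. d - real j) * (1 + t) powr (d - real m))"
      by (simp add: D_def fun_eq_iff)
    ultimately show ?thesis
      using has_real_derivative_const_mult_powr_shift[of t "\<Prod>j<m. d - real j" "d - real m"] that
      by simp
  qed
  have D0: "D 0 = (\<lambda>t. (1 + t) powr d)"
    by (simp add: D_def fun_eq_iff)
  have "\<exists>t. (if e < 0 then e < t \<and> t < 0 else 0 < t \<and> t < e) \<and>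
      (1 + e) powr d = (\<Sum>m<3. D m 0 / fact m * (e - 0) ^ m) + D 3 t / fact 3 * (e - 0) ^ 3"
    by (rule Taylor[of 3 D _ "-1/2" "1/2", OF _ D0]) (use D_deriv e False in auto)
  then obtain t where t_between: "if e < 0 then e < t \<and> t < 0 else 0 < t \<and> t < e"
    and taylor: "(1 + e) powr d = (\<Sum>m<3. D m 0 / fact m * (e - 0) ^ m) + D 3 t / fact 3 * (e - 0) ^ 3"
    by blast
  have t: "\<bar>t\<bar> \<le> \<bar>e\<bar>"
    using t_between by (auto split: if_splits)
  have "(\<Sum>m<3. D m 0 / fact m * (e - 0) ^ m) = 1 + d * e + d * (d - 1) / 2 * e\<^sup>2"
    by (simp add: D_def numeral_3_eq_3 fact_numeral lessThan_Suc eval_nat_numeral)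
  also have "\<dots> = 1 + d * e - d * (1 - d) / 2 * e\<^sup>2"
    by (simp add: field_simps)
  finally have "(\<Sum>m<3. D m 0 / fact m * (e - 0) ^ m) = 1 + d * e - d * (1 - d) / 2 * e\<^sup>2" .
  moreover have "D 3 t / fact 3 * e ^ 3 \<le> 3 * \<bar>e\<bar> ^ 3"
  proof -
    have "\<bar>D 3 t\<bar> \<le> 16"
      using powr_third_derivative_bound[OF d, of t] t e
      by (simp add: D_def numeral_3_eq_3 lessThan_Suc mult_ac)
    then have "\<bar>D 3 t / fact 3 * e ^ 3\<bar> \<le> 16 / 6 * \<bar>e\<bar> ^ 3"
      by (simp add: fact_numeral abs_mult power_abs mult_right_mono)
    then show ?thesis
      using abs_ge_self[of "D 3 t / fact 3 * e ^ 3"] zero_le_power_abs[of e 3] by linarith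
  qed
  ultimately show ?thesis using taylor by simp
qed

lemma abs_one_plus_powr_le:
  fixes d e :: real
  assumes d: "0 < d" "d \<le> 1/2"
  shows "\<bar>1 + e\<bar> powr d \<le> 1 + d * e - d * (1 - d) / 2 * e\<^sup>2 + 12 * \<bar>e\<bar> ^ 3"
proof (cases "\<bar>e\<bar> \<le> 1/2")
  case True
  then have "\<bar>1 + e\<bar> = 1 + e" by auto
  moreover have "0 \<le> \<bar>e\<bar> ^ 3" by simp
  ultimately show ?thesis
    using powr_one_plus_le_taylor[OF d True] by linarith
next
  case False
  have "\<bar>1 + e\<bar> powr d \<le> 1 + \<bar>e\<bar>"
  proof (cases "\<bar>1 + e\<bar> \<le> 1")
    case True
    then have "\<bar>1 + e\<bar> powr d \<le> 1"
      using d powr_mono2[of d "\<bar>1 + e\<bar>" 1] by simp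
    then show ?thesis by linarith
  next
    case False
    then have "\<bar>1 + e\<bar> powr d \<le> \<bar>1 + e\<bar> powr 1"
      using d by (intro powr_mono) auto
    then show ?thesis using False by simp
  qed
  moreover have "d * (1 - d) \<le> 1"
    using d by (intro mult_le_one) auto
  then have "d * (1 - d) / 2 * e\<^sup>2 \<le> 1 * e\<^sup>2"
    by (intro mult_right_mono) auto
  moreover have "\<bar>d * e\<bar> \<le> \<bar>e\<bar>"
    using d by (simp add: abs_mult mult_left_le_one_le)
  moreover have "2 * \<bar>e\<bar> + e\<^sup>2 \<le> 12 * \<bar>e\<bar> ^ 3"
  proof -
    have "\<bar>e\<bar> * (1/2) \<le> \<bar>e\<bar> * \<bar>e\<bar>"
      using False by (intro mult_left_mono) auto
    then have "2 + \<bar>e\<bar> \<le> 12 * \<bar>e\<bar>\<^sup>2"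
      using False by (simp add: power2_eq_square)
    then have "\<bar>e\<bar> * (2 + \<bar>e\<bar>) \<le> \<bar>e\<bar> * (12 * \<bar>e\<bar>\<^sup>2)"
      by (intro mult_left_mono) auto
    then show ?thesis by (simp add: algebra_simps power2_eq_square power3_eq_cube)
  qed
  ultimately show ?thesis
    using abs_ge_self[of "d * e"] abs_ge_minus_self[of "d * e"] by (simp add: power2_abs)
qed

lemma power3_add_le:
  fixes x y :: real
  assumes "0 \<le> x" "0 \<le> y"
  shows "(x + y) ^ 3 \<le> 4 * (x ^ 3 + y ^ 3)"
proof -
  have "4 * (x ^ 3 + y ^ 3) - (x + y) ^ 3 = 3 * (x + y) * (x - y)\<^sup>2"
    by (simp add: algebra_simps power2_eq_square power3_eq_cube)
  also have "\<dots> \<ge> 0" using assms by auto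
  finally show ?thesis by simp
qed

lemma (in prob_space) nn_integral_abs_affine_powr_le:
  fixes X :: "'a \<Rightarrow> real" and a b d K :: real
  assumes int: "integrable M X" "integrable M (\<lambda>\<omega>. (X \<omega>)\<^sup>2)" "integrable M (\<lambda>\<omega>. \<bar>X \<omega>\<bar> ^ 3)"
    and mean: "expectation X = 0" and var: "expectation (\<lambda>\<omega>. (X \<omega>)\<^sup>2) = 1"
    and moment3: "expectation (\<lambda>\<omega>. \<bar>X \<omega>\<bar> ^ 3) \<le> K"
    and d: "0 < d" "d \<le> 1/2"
  shows "(\<integral>\<^sup>+\<omega>. ennreal (\<bar>1 + a + b * X \<omega>\<bar> powr d) \<partial>M)
    \<le> ennreal (1 + d * a - d * (1 - d) / 2 * (a\<^sup>2 + b\<^sup>2) + 48 * (\<bar>a\<bar> ^ 3 + \<bar>b\<bar> ^ 3 * K))"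
proof -
  define Q where "Q \<omega> = 1 + d * (a + b * X \<omega>) - d * (1 - d) / 2 * (a + b * X \<omega>)\<^sup>2
    + 48 * (\<bar>a\<bar> ^ 3 + \<bar>b\<bar> ^ 3 * \<bar>X \<omega>\<bar> ^ 3)" for \<omega>
  have pointwise: "\<bar>1 + a + b * X \<omega>\<bar> powr d \<le> Q \<omega>" for \<omega>
  proof -
    have "\<bar>a + b * X \<omega>\<bar> ^ 3 \<le> (\<bar>a\<bar> + \<bar>b\<bar> * \<bar>X \<omega>\<bar>) ^ 3"
      by (intro power_mono) (auto simp: abs_mult intro: order.trans[OF abs_triangle_ineq])
    also have "\<dots> \<le> 4 * (\<bar>a\<bar> ^ 3 + \<bar>b\<bar> ^ 3 * \<bar>X \<omega>\<bar> ^ 3)"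
      using power3_add_le[of "\<bar>a\<bar>" "\<bar>b\<bar> * \<bar>X \<omega>\<bar>"] by (simp add: power_mult_distrib)
    finally show ?thesis
      using abs_one_plus_powr_le[OF d, of "a + b * X \<omega>"] by (simp add: Q_def add.assoc)
  qed
  have Q_expand: "Q \<omega> = (1 + d * a - d * (1 - d) / 2 * a\<^sup>2 + 48 * \<bar>a\<bar> ^ 3)
      + (d * b - d * (1 - d) * a * b) * X \<omega> - d * (1 - d) / 2 * b\<^sup>2 * (X \<omega>)\<^sup>2
      + 48 * \<bar>b\<bar> ^ 3 * \<bar>X \<omega>\<bar> ^ 3" for \<omega>
    by (simp add: Q_def field_simps power2_eq_square)
  have int_Q: "integrable M Q"
    unfolding Q_expand using int by auto
  have "expectation Q = 1 + d * a - d * (1 - d) / 2 * (a\<^sup>2 + b\<^sup>2) + 48 * \<bar>a\<bar> ^ 3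
      + 48 * \<bar>b\<bar> ^ 3 * expectation (\<lambda>\<omega>. \<bar>X \<omega>\<bar> ^ 3)"
    unfolding Q_expand using int mean var by (simp add: prob_space algebra_simps)
  also have "\<dots> \<le> 1 + d * a - d * (1 - d) / 2 * (a\<^sup>2 + b\<^sup>2) + 48 * (\<bar>a\<bar> ^ 3 + \<bar>b\<bar> ^ 3 * K)"
    using mult_left_mono[OF moment3, of "48 * \<bar>b\<bar> ^ 3"] by (simp add: algebra_simps)
  finally have E_Q: "expectation Q \<le> 1 + d * a - d * (1 - d) / 2 * (a\<^sup>2 + b\<^sup>2) + 48 * (\<bar>a\<bar> ^ 3 + \<bar>b\<bar> ^ 3 * K)" .
  have "(\<integral>\<^sup>+\<omega>. ennreal (\<bar>1 + a + b * X \<omega>\<bar> powr d) \<partial>M) \<le> (\<integral>\<^sup>+\<omega>. ennreal (Q \<omega>) \<partial>M)"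
    by (intro nn_integral_mono ennreal_leI pointwise)
  also have "\<dots> = ennreal (expectation Q)"
    by (rule nn_integral_eq_integral[OF int_Q]) (auto intro!: AE_I2 order.trans[OF _ pointwise])
  finally show ?thesis
    using E_Q by (meson ennreal_leI order.trans)
qed

text \<open>\<open>\<delta> a - \<delta> (1 - \<delta>) / 2 b\<^sup>2\<close> is the Ito generator of \<open>|x| powr \<delta>\<close> along
  \<open>dx = x (a dt + b dW)\<close>, divided by \<open>|x| powr \<delta>\<close>.\<close>
lemma powr_generator_le:
  fixes \<delta> a b :: real
  assumes \<delta>: "0 < \<delta>" "\<delta> \<le> 1/2" and a: "a \<le> (1 - 2 * \<delta>) * b\<^sup>2 / 2"
  shows "\<delta> * a - \<delta> * (1 - \<delta>) / 2 * b\<^sup>2 + \<delta>\<^sup>2 / 3 * (\<bar>a\<bar> + b\<^sup>2) \<le> 0"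
proof -
  define c where "c = \<delta>\<^sup>2 / 3"
  have c: "0 \<le> c" "c \<le> \<delta>" "c \<le> \<delta> * (1 - \<delta>) / 2"
    using \<delta> by (auto simp: c_def power2_eq_square field_simps)
  show ?thesis
  proof (cases "0 \<le> a")
    case True
    have "(\<delta> + c) * (1 - 2 * \<delta>) / 2 + c = (\<delta> - \<delta>\<^sup>2 - 2 * c * \<delta>) / 2"
      by (simp add: c_def field_simps power2_eq_square)
    also have "\<dots> \<le> (\<delta> - \<delta>\<^sup>2) / 2"
      using c \<delta> by simp
    also have "\<dots> = \<delta> * (1 - \<delta>) / 2"
      by (simp add: algebra_simps power2_eq_square)
    finally have coeff: "(\<delta> + c) * (1 - 2 * \<delta>) / 2 + c \<le> \<delta> * (1 - \<delta>) / 2" .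
    have "(\<delta> + c) * a \<le> (\<delta> + c) * ((1 - 2 * \<delta>) * b\<^sup>2 / 2)"
      using a \<delta> c by (intro mult_left_mono) auto
    then have "\<delta> * a + c * a + c * b\<^sup>2 \<le> b\<^sup>2 * ((\<delta> + c) * (1 - 2 * \<delta>) / 2 + c)"
      by (simp add: algebra_simps)
    also have "\<dots> \<le> b\<^sup>2 * (\<delta> * (1 - \<delta>) / 2)"
      using coeff by (intro mult_left_mono) auto
    finally show ?thesis
      unfolding c_def[symmetric] using True by (simp add: algebra_simps)
  next
    case False
    have "\<delta> * a \<le> c * a"
      using False c by (intro mult_right_mono_neg) auto
    moreover have "c * b\<^sup>2 \<le> \<delta> * (1 - \<delta>) / 2 * b\<^sup>2"
      using c by (intro mult_right_mono) auto
    moreover have "c * (\<bar>a\<bar> + b\<^sup>2) = - (c * a) + c * b\<^sup>2"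
      using False by (simp add: algebra_simps)
    ultimately show ?thesis
      unfolding c_def[symmetric] by linarith
  qed
qed

lemma cubic_terms_le:
  fixes h a b K :: real
  assumes h: "0 < h" "h \<le> 1" and a: "\<bar>a\<bar> \<le> 1" and b: "\<bar>b\<bar> \<le> 1" and K: "1 \<le> K"
  shows "\<bar>h * a\<bar> ^ 3 + \<bar>sqrt h * b\<bar> ^ 3 * K \<le> h * (sqrt h * K) * (\<bar>a\<bar> + b\<^sup>2)"
proof -
  define s where "s = sqrt h"
  have s: "0 < s" "s \<le> 1" "s\<^sup>2 = h"
    using h by (auto simp: s_def)
  have "h\<^sup>2 \<le> s"
    using s by (auto simp: power2_eq_square mult_le_one)
  have "\<bar>h * a\<bar> ^ 3 = h * h\<^sup>2 * (\<bar>a\<bar> * \<bar>a\<bar>\<^sup>2)"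
    using h by (simp add: abs_mult power_mult_distrib power3_eq_cube power2_eq_square)
  also have "\<dots> \<le> h * s * (\<bar>a\<bar> * 1)"
    using h s \<open>h\<^sup>2 \<le> s\<close> a by (intro mult_mono mult_left_mono) (auto simp: abs_square_le_1)
  also have "\<dots> \<le> h * s * \<bar>a\<bar> * K"
    using mult_left_mono[OF K, of "h * s * \<bar>a\<bar>"] h s by simp
  finally have cube_a: "\<bar>h * a\<bar> ^ 3 \<le> h * s * \<bar>a\<bar> * K" .
  have "\<bar>sqrt h * b\<bar> ^ 3 = s ^ 3 * \<bar>b\<bar> ^ 3"
    using s by (simp add: s_def[symmetric] abs_mult power_mult_distrib)
  also have "\<dots> = h * s * (\<bar>b\<bar> * b\<^sup>2)"
    unfolding s(3)[symmetric] by (simp add: power3_eq_cube power2_eq_square abs_mult_self_eq)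
  also have "\<dots> \<le> h * s * (1 * b\<^sup>2)"
    using h s b by (intro mult_left_mono mult_right_mono) auto
  finally have "\<bar>sqrt h * b\<bar> ^ 3 * K \<le> h * s * b\<^sup>2 * K"
    using K by (intro mult_right_mono) auto
  then show ?thesis
    using cube_a by (simp add: s_def algebra_simps)
qed

lemma small_step_expansion_le_one:
  fixes h a b \<delta> c K :: real
  assumes h: "0 < h" "h \<le> 1" and a: "\<bar>a\<bar> \<le> 1" and b: "\<bar>b\<bar> \<le> 1" and K: "1 \<le> K"
    and small: "96 * sqrt h * K \<le> c" and \<delta>: "0 \<le> \<delta>" "\<delta> \<le> 1"
    and drift: "\<delta> * a - \<delta> * (1 - \<delta>) / 2 * b\<^sup>2 + c * (\<bar>a\<bar> + b\<^sup>2) \<le> 0"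
  shows "1 + \<delta> * (h * a) - \<delta> * (1 - \<delta>) / 2 * ((h * a)\<^sup>2 + (sqrt h * b)\<^sup>2)
    + 48 * (\<bar>h * a\<bar> ^ 3 + \<bar>sqrt h * b\<bar> ^ 3 * K) + h * c / 2 * (\<bar>a\<bar> + b\<^sup>2) \<le> 1"
proof -
  have "48 * (\<bar>h * a\<bar> ^ 3 + \<bar>sqrt h * b\<bar> ^ 3 * K) \<le> h * (48 * sqrt h * K) * (\<bar>a\<bar> + b\<^sup>2)"
    using cubic_terms_le[OF h a b K] by simp
  also have "\<dots> \<le> h * (c / 2) * (\<bar>a\<bar> + b\<^sup>2)"
    using small h by (intro mult_right_mono mult_left_mono) auto
  finally have cubic: "48 * (\<bar>h * a\<bar> ^ 3 + \<bar>sqrt h * b\<bar> ^ 3 * K) \<le> h * (c / 2) * (\<bar>a\<bar> + b\<^sup>2)" .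
  have "h * (\<delta> * a - \<delta> * (1 - \<delta>) / 2 * b\<^sup>2 + c * (\<bar>a\<bar> + b\<^sup>2)) \<le> 0"
    using h drift by (simp add: mult_nonneg_nonpos)
  then have "\<delta> * (h * a) - \<delta> * (1 - \<delta>) / 2 * (h * b\<^sup>2) + 2 * (h * (c / 2) * (\<bar>a\<bar> + b\<^sup>2)) \<le> 0"
    by (simp add: algebra_simps)
  moreover have "\<delta> * (1 - \<delta>) / 2 * ((h * a)\<^sup>2 + (sqrt h * b)\<^sup>2)
      = \<delta> * (1 - \<delta>) / 2 * (h * a)\<^sup>2 + \<delta> * (1 - \<delta>) / 2 * (h * b\<^sup>2)"
    using h by (simp add: power_mult_distrib algebra_simps)
  moreover have "0 \<le> \<delta> * (1 - \<delta>) / 2 * (h * a)\<^sup>2"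
    using \<delta> by simp
  moreover have "h * c / 2 * (\<bar>a\<bar> + b\<^sup>2) = h * (c / 2) * (\<bar>a\<bar> + b\<^sup>2)"
    by simp
  ultimately show ?thesis
    using cubic by linarith
qed

lemma ennreal_add_le_one:
  fixes x y :: real
  assumes "x + y \<le> 1" and "0 \<le> y" and "y \<le> 1"
  shows "ennreal x + ennreal y \<le> 1"
proof (cases "0 \<le> x")
  case True
  then have "ennreal x + ennreal y = ennreal (x + y)"
    using assms by simp
  then show ?thesis
    using assms by simp
qed (use assms in \<open>simp add: ennreal_neg\<close>)

lemma (in prob_space) nn_integral_step_factor_powr_decrement:
  fixes X :: "'a \<Rightarrow> real" and a b h \<delta> K :: real
  assumes int: "integrable M X" "integrable M (\<lambda>\<omega>. (X \<omega>)\<^sup>2)" "integrable M (\<lambda>\<omega>. \<bar>X \<omega>\<bar> ^ 3)"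
    and mean: "expectation X = 0" and var: "expectation (\<lambda>\<omega>. (X \<omega>)\<^sup>2) = 1"
    and moment3: "expectation (\<lambda>\<omega>. \<bar>X \<omega>\<bar> ^ 3) \<le> K" and K: "1 \<le> K"
    and \<delta>: "0 < \<delta>" "\<delta> \<le> 1/2" and a: "\<bar>a\<bar> \<le> 1" and b: "\<bar>b\<bar> \<le> 1"
    and drift: "a \<le> (1 - 2 * \<delta>) * b\<^sup>2 / 2"
    and h: "0 < h" "sqrt h \<le> \<delta>\<^sup>2 / (288 * K)"
  shows "(\<integral>\<^sup>+\<omega>. ennreal (\<bar>1 + h * a + sqrt h * b * X \<omega>\<bar> powr \<delta>) \<partial>M)
    + ennreal (h * \<delta>\<^sup>2 / 6 * (\<bar>a\<bar> + b\<^sup>2)) \<le> 1"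
proof -
  define R where "R = 1 + \<delta> * (h * a) - \<delta> * (1 - \<delta>) / 2 * ((h * a)\<^sup>2 + (sqrt h * b)\<^sup>2)
    + 48 * (\<bar>h * a\<bar> ^ 3 + \<bar>sqrt h * b\<bar> ^ 3 * K)"
  define \<kappa> where "\<kappa> = h * \<delta>\<^sup>2 / 6 * (\<bar>a\<bar> + b\<^sup>2)"
  have "\<delta>\<^sup>2 \<le> 1"
    using \<delta> by (simp add: abs_square_le_1)
  then have "sqrt h \<le> 1"
    using h K by (smt (verit) divide_le_eq_1)
  then have h1: "h \<le> 1"
    by simp
  have "96 * sqrt h * K \<le> 96 * (\<delta>\<^sup>2 / (288 * K)) * K"
    using h K by (intro mult_right_mono) auto
  then have small: "96 * sqrt h * K \<le> \<delta>\<^sup>2 / 3"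
    using K by simp
  have "R + h * (\<delta>\<^sup>2 / 3) / 2 * (\<bar>a\<bar> + b\<^sup>2) \<le> 1"
    unfolding R_def
    by (rule small_step_expansion_le_one[OF h(1) h1 a b K small _ _ powr_generator_le[OF \<delta> drift]])
      (use \<delta> in auto)
  moreover have "\<bar>a\<bar> + b\<^sup>2 \<le> 2"
    using a b abs_square_le_1[of b] by linarith
  moreover have "h * \<delta>\<^sup>2 \<le> 1 * 1"
    using h1 \<open>\<delta>\<^sup>2 \<le> 1\<close> h by (intro mult_mono) auto
  ultimately have "ennreal R + ennreal \<kappa> \<le> 1"
    using h mult_mono[of "h * \<delta>\<^sup>2 / 6" "1/6" "\<bar>a\<bar> + b\<^sup>2" 2]
    by (intro ennreal_add_le_one) (auto simp: \<kappa>_def)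
  moreover have "(\<integral>\<^sup>+\<omega>. ennreal (\<bar>1 + h * a + sqrt h * b * X \<omega>\<bar> powr \<delta>) \<partial>M) \<le> ennreal R"
    unfolding R_def by (rule nn_integral_abs_affine_powr_le[OF int mean var moment3 \<delta>])
  ultimately show ?thesis
    unfolding \<kappa>_def by (meson add_right_mono order_trans)
qed

lemma (in prob_space) nn_integral_indep_var_freeze:
  assumes indep: "indep_var N1 Y N2 Z" and G: "G \<in> borel_measurable (N1 \<Otimes>\<^sub>M N2)"
  shows "(\<integral>\<^sup>+\<omega>. G (Y \<omega>, Z \<omega>) \<partial>M) = (\<integral>\<^sup>+\<omega>. \<integral>\<^sup>+\<omega>'. G (Y \<omega>, Z \<omega>') \<partial>M \<partial>M)"
proof -
  have Y: "random_variable N1 Y" and Z: "random_variable N2 Z"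
    and product: "distr M N1 Y \<Otimes>\<^sub>M distr M N2 Z = distr M (N1 \<Otimes>\<^sub>M N2) (\<lambda>\<omega>. (Y \<omega>, Z \<omega>))"
    using indep by (auto simp: indep_var_distribution_eq)
  interpret Z: prob_space "distr M N2 Z"
    using Z by (rule prob_space_distr)
  have "sets (N1 \<Otimes>\<^sub>M distr M N2 Z) = sets (N1 \<Otimes>\<^sub>M N2)"
    by (rule sets_pair_measure_cong) simp_all
  then have G1: "G \<in> borel_measurable (N1 \<Otimes>\<^sub>M distr M N2 Z)"
    using G by (subst measurable_cong_sets[OF _ refl]) auto
  have "sets (distr M N1 Y \<Otimes>\<^sub>M distr M N2 Z) = sets (N1 \<Otimes>\<^sub>M N2)"
    by (rule sets_pair_measure_cong) simp_all
  then have G2: "G \<in> borel_measurable (distr M N1 Y \<Otimes>\<^sub>M distr M N2 Z)"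
    using G by (subst measurable_cong_sets[OF _ refl]) auto
  have "(\<integral>\<^sup>+\<omega>. G (Y \<omega>, Z \<omega>) \<partial>M) = (\<integral>\<^sup>+p. G p \<partial>distr M (N1 \<Otimes>\<^sub>M N2) (\<lambda>\<omega>. (Y \<omega>, Z \<omega>)))"
    using Y Z G by (intro nn_integral_distr[symmetric]) auto
  also have "\<dots> = (\<integral>\<^sup>+p. G p \<partial>(distr M N1 Y \<Otimes>\<^sub>M distr M N2 Z))"
    by (simp only: product)
  also have "\<dots> = (\<integral>\<^sup>+v. \<integral>\<^sup>+t. G (v, t) \<partial>distr M N2 Z \<partial>distr M N1 Y)"
    using G2 by (rule Z.nn_integral_fst[symmetric])
  also have "\<dots> = (\<integral>\<^sup>+\<omega>. \<integral>\<^sup>+t. G (Y \<omega>, t) \<partial>distr M N2 Z \<partial>M)"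
    using Y Z.borel_measurable_nn_integral_fst[OF G1] by (intro nn_integral_distr) auto
  also have "\<dots> = (\<integral>\<^sup>+\<omega>. \<integral>\<^sup>+\<omega>'. G (Y \<omega>, Z \<omega>') \<partial>M \<partial>M)"
    using Y Z G by (intro nn_integral_cong nn_integral_distr) (auto intro: measurable_Pair2)
  finally show ?thesis .
qed

lemma emeasure_scaled_le_set_nn_integral:
  assumes "S \<in> sets M" and "\<And>\<omega>. \<omega> \<in> S \<Longrightarrow> c \<le> f \<omega>"
  shows "ennreal c * emeasure M S \<le> (\<integral>\<^sup>+\<omega>\<in>S. ennreal (f \<omega>) \<partial>M)"
proof -
  have "ennreal c * emeasure M S = (\<integral>\<^sup>+\<omega>. ennreal c * indicator S \<omega> \<partial>M)"
    using assms by (simp add: nn_integral_cmult_indicator)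
  also have "\<dots> \<le> (\<integral>\<^sup>+\<omega>\<in>S. ennreal (f \<omega>) \<partial>M)"
    using assms by (intro nn_integral_mono) (auto simp: indicator_def intro: ennreal_leI)
  finally show ?thesis .
qed

lemma (in prob_space) measure_le_of_scaled_emeasure_le:
  assumes "ennreal c * emeasure M S \<le> ennreal b" and "0 < c" and "0 \<le> b"
  shows "measure M S \<le> b / c"
proof -
  have "ennreal (c * measure M S) \<le> ennreal b"
    using assms by (simp add: emeasure_eq_measure ennreal_mult)
  then have "c * measure M S \<le> b"
    using assms by (simp add: ennreal_le_iff)
  then show ?thesis
    using assms by (simp add: pos_le_divide_eq mult.commute)
qed

lemma (in prob_space) AE_if_exceptions_small:
  assumes "\<And>e. 0 < e \<Longrightarrow> \<exists>S\<in>sets M. {\<omega>\<in>space M. \<not> P \<omega>} \<subseteq> S \<and> measure M S \<le> e"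
  shows "AE \<omega> in M. P \<omega>"
proof -
  have "\<forall>i::nat. \<exists>S\<in>sets M. {\<omega>\<in>space M. \<not> P \<omega>} \<subseteq> S \<and> measure M S \<le> inverse (real (Suc i))"
    using assms by simp
  then obtain S where S: "\<And>i. S i \<in> sets M" "\<And>i. {\<omega>\<in>space M. \<not> P \<omega>} \<subseteq> S i"
    and small: "\<And>i. measure M (S i) \<le> inverse (real (Suc i))"
    by metis
  have T: "(\<Inter>i. S i) \<in> sets M"
    using S by auto
  have "measure M (\<Inter>i. S i) \<le> inverse (real (Suc i))" for i
  proof -
    have "measure M (\<Inter>i. S i) \<le> measure M (S i)"
      using S by (intro finite_measure_mono) auto
    then show ?thesis
      using small[of i] by linarith
  qed
  then have "measure M (\<Inter>i. S i) \<le> 0"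
    by (metis reals_Archimedean not_le order.strict_trans2)
  then have "measure M (\<Inter>i. S i) = 0"
    using measure_nonneg[of M "\<Inter>i. S i"] by linarith
  then have "(\<Inter>i. S i) \<in> null_sets M"
    using T by (simp add: emeasure_eq_measure null_sets_def)
  then show ?thesis
    using S by (intro AE_I'[of "\<Inter>i. S i"]) auto
qed

lemma tendsto_zero_if_small_values_trapped:
  fixes v :: "nat \<Rightarrow> real"
  assumes nonneg: "\<And>n. 0 \<le> v n"
    and trap: "\<And>c. 0 < c \<Longrightarrow> \<exists>\<eta>>0. \<forall>m. v m \<le> \<eta> \<longrightarrow> (\<forall>k\<ge>m. v k < c)"
    and small: "\<And>\<eta>. 0 < \<eta> \<Longrightarrow> \<exists>m. v m \<le> \<eta>"
  shows "v \<longlonglongrightarrow> 0"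
proof (rule LIMSEQ_I)
  fix c :: real assume "0 < c"
  then obtain \<eta> where "0 < \<eta>" and \<eta>: "\<forall>m. v m \<le> \<eta> \<longrightarrow> (\<forall>k\<ge>m. v k < c)"
    using trap by blast
  then obtain m where "v m \<le> \<eta>"
    using small by blast
  then show "\<exists>m. \<forall>k\<ge>m. norm (v k - 0) < c"
    using \<eta> nonneg by auto
qed

lemma exists_powr_abs_le_if_tendsto_zero:
  fixes u :: "nat \<Rightarrow> real" and \<psi> :: "real \<Rightarrow> real"
  assumes d: "0 < d" and \<psi>_cont: "continuous_on UNIV \<psi>" and \<psi>_pos: "\<And>t. t \<noteq> 0 \<Longrightarrow> 0 < \<psi> t"
    and lim: "(\<lambda>n. \<psi> (u n)) \<longlonglongrightarrow> 0" and bounded: "\<And>n. \<bar>u n\<bar> powr d \<le> K" and \<eta>: "0 < \<eta>"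
  shows "\<exists>m. \<bar>u m\<bar> powr d \<le> \<eta>"
proof (rule ccontr)
  assume "\<not> ?thesis"
  then have far: "\<eta> \<le> \<bar>u n\<bar> powr d" for n
    by (auto simp: not_le less_imp_le)
  define S where "S = {t. \<eta> \<le> \<bar>t\<bar> powr d \<and> \<bar>t\<bar> powr d \<le> K}"
  have cont: "continuous_on UNIV (\<lambda>t::real. \<bar>t\<bar> powr d)"
    using d by (intro continuous_intros continuous_on_powr') auto
  have "closed S"
    unfolding S_def Collect_conj_eq
    using closed_Collect_le[OF continuous_on_const cont] closed_Collect_le[OF cont continuous_on_const]
    by (rule closed_Int)
  moreover have "bounded S"
  proof (rule boundedI)
    fix t assume "t \<in> S"
    then have "(\<bar>t\<bar> powr d) powr (1 / d) \<le> K powr (1 / d)"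
      using d by (intro powr_mono2) (auto simp: S_def)
    then show "norm t \<le> K powr (1 / d)"
      using d by (simp add: powr_powr)
  qed
  ultimately have "compact S"
    by (simp add: compact_eq_bounded_closed)
  have u_in_S: "u n \<in> S" for n
    using far bounded by (simp add: S_def)
  then have "S \<noteq> {}"
    by blast
  obtain t0 where "t0 \<in> S" and t0_min: "\<forall>t\<in>S. \<psi> t0 \<le> \<psi> t"
    using continuous_attains_inf[OF \<open>compact S\<close> \<open>S \<noteq> {}\<close> continuous_on_subset[OF \<psi>_cont subset_UNIV]]
    by blast
  have "t0 \<noteq> 0"
    using \<open>t0 \<in> S\<close> \<eta> d by (auto simp: S_def)
  moreover have "\<psi> t0 \<le> 0"
    using u_in_S t0_min by (intro LIMSEQ_le_const[OF lim]) auto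
  ultimately show False
    using \<psi>_pos[of t0] by simp
qed

lemma tendsto_zero_if_powr_abs_tendsto_zero:
  fixes u :: "nat \<Rightarrow> real"
  assumes d: "0 < d" and lim: "(\<lambda>n. \<bar>u n\<bar> powr d) \<longlonglongrightarrow> 0"
  shows "u \<longlonglongrightarrow> 0"
proof -
  have "(\<lambda>n. (\<bar>u n\<bar> powr d) powr (1 / d)) \<longlonglongrightarrow> 0"
    using d by (intro tendsto_zero_powrI[OF lim tendsto_const]) auto
  then have "(\<lambda>n. \<bar>u n\<bar>) \<longlonglongrightarrow> 0"
    using d by (simp add: powr_powr)
  then show ?thesis
    by (simp add: tendsto_rabs_zero_iff)
qed

primrec mult_recursion ::
    "(real \<Rightarrow> real \<Rightarrow> real) \<Rightarrow> (nat \<Rightarrow> 'a \<Rightarrow> real) \<Rightarrow> real \<Rightarrow> nat \<Rightarrow> 'a \<Rightarrow> real" where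
  "mult_recursion F \<xi> x0 0 \<omega> = x0"
| "mult_recursion F \<xi> x0 (Suc n) \<omega> =
     mult_recursion F \<xi> x0 n \<omega> * F (mult_recursion F \<xi> x0 n \<omega>) (\<xi> (Suc n) \<omega>)"

lemma xseq_eq_mult_recursion:
  "xseq f g \<xi> h x0 n \<omega> = mult_recursion (\<lambda>u t. 1 + h * f u + sqrt h * g u * t) \<xi> x0 n \<omega>"
  by (induction n) simp_all

locale powr_lyapunov_recursion = prob_space M for M :: "'a measure" +
  fixes \<xi> :: "nat \<Rightarrow> 'a \<Rightarrow> real" and F :: "real \<Rightarrow> real \<Rightarrow> real"
    and d :: real and \<phi> :: "real \<Rightarrow> real" and x0 :: real
  assumes indep: "indep_vars (\<lambda>_. borel) \<xi> {1..}"
    and F_measurable: "case_prod F \<in> borel_measurable (borel \<Otimes>\<^sub>M borel)"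
    and d_pos: "0 < d"
    and \<phi>_cont: "continuous_on UNIV \<phi>"
    and \<phi>_pos: "\<And>u. u \<noteq> 0 \<Longrightarrow> 0 < \<phi> u"
    and decrement: "\<And>n u. 1 \<le> n \<Longrightarrow> u \<noteq> 0 \<Longrightarrow>
      (\<integral>\<^sup>+\<omega>. ennreal (\<bar>F u (\<xi> n \<omega>)\<bar> powr d) \<partial>M) + ennreal (\<phi> u) \<le> 1"
begin

abbreviation X :: "nat \<Rightarrow> 'a \<Rightarrow> real" where
  "X \<equiv> mult_recursion F \<xi> x0"

abbreviation V :: "nat \<Rightarrow> 'a \<Rightarrow> real" where
  "V n \<omega> \<equiv> \<bar>X n \<omega>\<bar> powr d"

abbreviation noise_space :: "nat \<Rightarrow> (nat \<Rightarrow> real) measure" where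
  "noise_space n \<equiv> \<Pi>\<^sub>M i\<in>{1..n}. borel"

definition noise :: "nat \<Rightarrow> 'a \<Rightarrow> nat \<Rightarrow> real" where
  "noise n \<omega> = (\<lambda>i\<in>{1..n}. \<xi> i \<omega>)"

definition history :: "nat \<Rightarrow> 'a measure" where
  "history n = vimage_algebra (space M) (noise n) (noise_space n)"

abbreviation X_of_noise :: "nat \<Rightarrow> (nat \<Rightarrow> real) \<Rightarrow> real" where
  "X_of_noise \<equiv> mult_recursion F (\<lambda>i v. v i) x0"

lemma \<xi>_measurable[measurable]: "1 \<le> n \<Longrightarrow> \<xi> n \<in> borel_measurable M"
  using indep unfolding indep_vars_def by auto

lemma F_comp_measurable[measurable]:
  "f \<in> borel_measurable N \<Longrightarrow> g \<in> borel_measurable N \<Longrightarrow> (\<lambda>x. F (f x) (g x)) \<in> borel_measurable N"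
  using measurable_compose[OF measurable_Pair F_measurable] by simp

lemma noise_measurable[measurable]: "noise n \<in> measurable M (noise_space n)"
  unfolding noise_def by (intro measurable_restrict) auto

lemma X_eq_X_of_noise: "k \<le> n \<Longrightarrow> X k \<omega> = X_of_noise k (noise n \<omega>)"
  by (induction k) (auto simp: noise_def)

lemma X_of_noise_measurable[measurable]: "k \<le> n \<Longrightarrow> X_of_noise k \<in> borel_measurable (noise_space n)"
proof (induction k)
  case 0
  have "X_of_noise 0 = (\<lambda>_. x0)"
    by (simp add: fun_eq_iff)
  then show ?case by simp
next
  case (Suc k)
  then show ?case
    by (simp add: measurable_component_singleton)
qed

lemma space_history[simp]: "space (history n) = space M"
  by (simp add: history_def)

lemma sets_history: "sets (history n) = {noise n -` B \<inter> space M | B. B \<in> sets (noise_space n)}"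
  unfolding history_def using measurable_space[OF noise_measurable] by (intro sets_vimage_algebra2) auto

lemma noise_measurable_history[measurable]: "noise n \<in> measurable (history n) (noise_space n)"
  unfolding history_def using measurable_space[OF noise_measurable]
  by (intro measurable_vimage_algebra1) auto

lemma sets_history_subset: "sets (history n) \<subseteq> sets M"
  using noise_measurable by (auto simp: sets_history)

lemma sets_history_mono:
  assumes "n \<le> m"
  shows "sets (history n) \<subseteq> sets (history m)"
proof
  fix A assume "A \<in> sets (history n)"
  then obtain B where B: "B \<in> sets (noise_space n)" and A: "A = noise n -` B \<inter> space M"
    by (auto simp: sets_history)
  have restrict_noise: "(\<lambda>v. restrict v {1..n}) \<in> measurable (noise_space m) (noise_space n)"
    using assms by (intro measurable_restrict_subset) auto
  have "restrict (noise m \<omega>) {1..n} = noise n \<omega>" for \<omega>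
    using assms by (auto simp: noise_def fun_eq_iff)
  then have "A = noise m -` ((\<lambda>v. restrict v {1..n}) -` B \<inter> space (noise_space m)) \<inter> space M"
    using measurable_space[OF noise_measurable, of _ m] by (auto simp: A)
  then show "A \<in> sets (history m)"
    using measurable_sets[OF restrict_noise B] unfolding sets_history by blast
qed

lemma space_in_history: "space M \<in> sets (history n)"
  using sets.top[of "history n"] by simp

lemma X_measurable_history[measurable]: "k \<le> n \<Longrightarrow> X k \<in> borel_measurable (history n)"
  by (subst measurable_cong[OF X_eq_X_of_noise]) auto

lemma X_measurable[measurable]: "X k \<in> borel_measurable M"
  using measurable_comp[OF noise_measurable X_of_noise_measurable[of k k]]
  by (subst measurable_cong[OF X_eq_X_of_noise[of k k]]) (auto simp: comp_def)

text \<open>\<open>indep_var\<close> needs both random variables to take values in the same type, hence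
  \<open>\<xi> (Suc n)\<close> packed as a one-point vector.\<close>
abbreviation next_noise :: "nat \<Rightarrow> 'a \<Rightarrow> nat \<Rightarrow> real" where
  "next_noise n \<omega> \<equiv> \<lambda>i\<in>{Suc n}. \<xi> i \<omega>"

lemma noise_indep_next_noise:
  "indep_var (noise_space n) (noise n) (\<Pi>\<^sub>M i\<in>{Suc n}. borel) (next_noise n)"
  unfolding noise_def by (rule indep_var_restrict[OF indep]) auto

lemma \<phi>_measurable[measurable]: "\<phi> \<in> borel_measurable borel"
  using \<phi>_cont by (rule borel_measurable_continuous_onI)

lemma nn_integral_one_step_le:
  assumes "1 \<le> n"
  shows "(\<integral>\<^sup>+\<omega>. ennreal (\<bar>u\<bar> powr d * \<bar>F u (\<xi> n \<omega>)\<bar> powr d) + ennreal (\<bar>u\<bar> powr d * \<phi> u) \<partial>M)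
    \<le> ennreal (\<bar>u\<bar> powr d)"
proof (cases "u = 0")
  case False
  have "(\<integral>\<^sup>+\<omega>. ennreal (\<bar>u\<bar> powr d * \<bar>F u (\<xi> n \<omega>)\<bar> powr d) + ennreal (\<bar>u\<bar> powr d * \<phi> u) \<partial>M)
      = ennreal (\<bar>u\<bar> powr d) * ((\<integral>\<^sup>+\<omega>. ennreal (\<bar>F u (\<xi> n \<omega>)\<bar> powr d) \<partial>M) + ennreal (\<phi> u))"
    using assms by (simp add: ennreal_mult' nn_integral_cmult nn_integral_add emeasure_space_1 distrib_left)
  also have "\<dots> \<le> ennreal (\<bar>u\<bar> powr d) * 1"
    using decrement[OF assms False] by (intro mult_left_mono) auto
  finally show ?thesis
    by simp
qed (simp add: d_pos)

lemma set_nn_integral_V_step: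
  assumes A: "A \<in> sets (history n)"
  shows "(\<integral>\<^sup>+\<omega>\<in>A. ennreal (V (Suc n) \<omega>) + ennreal (V n \<omega> * \<phi> (X n \<omega>)) \<partial>M)
    \<le> (\<integral>\<^sup>+\<omega>\<in>A. ennreal (V n \<omega>) \<partial>M)"
proof -
  obtain B where B: "B \<in> sets (noise_space n)" and A_eq: "A = noise n -` B \<inter> space M"
    using A by (auto simp: sets_history)
  have indicator_A: "indicator A \<omega> = (indicator B (noise n \<omega>) :: ennreal)" if "\<omega> \<in> space M" for \<omega>
    using that by (simp add: A_eq indicator_def)
  define G where "G p = indicator B (fst p)
    * (ennreal (\<bar>X_of_noise n (fst p)\<bar> powr d * \<bar>F (X_of_noise n (fst p)) (snd p (Suc n))\<bar> powr d)
      + ennreal (\<bar>X_of_noise n (fst p)\<bar> powr d * \<phi> (X_of_noise n (fst p))))"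
    for p :: "(nat \<Rightarrow> real) \<times> (nat \<Rightarrow> real)"
  have [measurable]: "X_of_noise n \<in> borel_measurable (noise_space n)"
    by (rule X_of_noise_measurable) simp
  have G_measurable: "G \<in> borel_measurable (noise_space n \<Otimes>\<^sub>M (\<Pi>\<^sub>M i\<in>{Suc n}. borel))"
    unfolding G_def[abs_def] using B by measurable
  have "(\<integral>\<^sup>+\<omega>\<in>A. ennreal (V (Suc n) \<omega>) + ennreal (V n \<omega> * \<phi> (X n \<omega>)) \<partial>M)
      = (\<integral>\<^sup>+\<omega>. G (noise n \<omega>, next_noise n \<omega>) \<partial>M)"
    by (intro nn_integral_cong)
      (simp add: G_def indicator_A X_eq_X_of_noise[of n n] abs_mult powr_mult mult.commute)
  also have "\<dots> = (\<integral>\<^sup>+\<omega>. \<integral>\<^sup>+\<omega>'. G (noise n \<omega>, next_noise n \<omega>') \<partial>M \<partial>M)"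
    by (rule nn_integral_indep_var_freeze[OF noise_indep_next_noise G_measurable])
  also have "\<dots> \<le> (\<integral>\<^sup>+\<omega>. indicator B (noise n \<omega>) * ennreal (\<bar>X_of_noise n (noise n \<omega>)\<bar> powr d) \<partial>M)"
    using B by (intro nn_integral_mono)
      (simp add: G_def nn_integral_cmult mult_left_mono nn_integral_one_step_le)
  also have "\<dots> = (\<integral>\<^sup>+\<omega>\<in>A. ennreal (V n \<omega>) \<partial>M)"
    by (intro nn_integral_cong) (simp add: indicator_A X_eq_X_of_noise[of n n] mult.commute)
  finally show ?thesis .
qed

lemma set_nn_integral_V_mono:
  assumes "A \<in> sets (history n)"
  shows "(\<integral>\<^sup>+\<omega>\<in>A. ennreal (V (Suc n) \<omega>) \<partial>M) \<le> (\<integral>\<^sup>+\<omega>\<in>A. ennreal (V n \<omega>) \<partial>M)"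
  by (rule order_trans[OF nn_integral_mono set_nn_integral_V_step[OF assms]])
    (simp add: mult_right_mono)

lemma nn_integral_V_plus_sum_le:
  "(\<integral>\<^sup>+\<omega>. ennreal (V N \<omega>) \<partial>M) + (\<Sum>n<N. \<integral>\<^sup>+\<omega>. ennreal (V n \<omega> * \<phi> (X n \<omega>)) \<partial>M)
    \<le> ennreal (\<bar>x0\<bar> powr d)"
proof (induction N)
  case 0
  then show ?case
    by (simp add: emeasure_space_1)
next
  case (Suc N)
  have "(\<integral>\<^sup>+\<omega>. ennreal (V (Suc N) \<omega>) \<partial>M) + (\<integral>\<^sup>+\<omega>. ennreal (V N \<omega> * \<phi> (X N \<omega>)) \<partial>M)
      = (\<integral>\<^sup>+\<omega>\<in>space M. ennreal (V (Suc N) \<omega>) + ennreal (V N \<omega> * \<phi> (X N \<omega>)) \<partial>M)"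
    by (simp add: nn_integral_add)
  also have "\<dots> \<le> (\<integral>\<^sup>+\<omega>. ennreal (V N \<omega>) \<partial>M)"
    using set_nn_integral_V_step[OF space_in_history] by simp
  finally have "(\<integral>\<^sup>+\<omega>. ennreal (V (Suc N) \<omega>) \<partial>M) + (\<Sum>n<Suc N. \<integral>\<^sup>+\<omega>. ennreal (V n \<omega> * \<phi> (X n \<omega>)) \<partial>M)
      \<le> (\<integral>\<^sup>+\<omega>. ennreal (V N \<omega>) \<partial>M) + (\<Sum>n<N. \<integral>\<^sup>+\<omega>. ennreal (V n \<omega> * \<phi> (X n \<omega>)) \<partial>M)"
    by (simp add: add_right_mono ac_simps)
  then show ?case
    using Suc.IH by (rule order_trans)
qed

lemma AE_decrement_tendsto_zero: "AE \<omega> in M. (\<lambda>n. V n \<omega> * \<phi> (X n \<omega>)) \<longlonglongrightarrow> 0"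
proof -
  have nonneg: "0 \<le> V n \<omega> * \<phi> (X n \<omega>)" for n \<omega>
    using \<phi>_pos[of "X n \<omega>"] by (cases "X n \<omega> = 0") auto
  have "(\<integral>\<^sup>+\<omega>. (\<Sum>n. ennreal (V n \<omega> * \<phi> (X n \<omega>))) \<partial>M)
      = (\<Sum>n. \<integral>\<^sup>+\<omega>. ennreal (V n \<omega> * \<phi> (X n \<omega>)) \<partial>M)"
    by (simp add: nn_integral_suminf)
  also have "\<dots> \<le> ennreal (\<bar>x0\<bar> powr d)"
  proof (intro suminf_le_const summableI)
    show "(\<Sum>n<N. \<integral>\<^sup>+\<omega>. ennreal (V n \<omega> * \<phi> (X n \<omega>)) \<partial>M) \<le> ennreal (\<bar>x0\<bar> powr d)" for N
      using nn_integral_V_plus_sum_le[of N] by (rule order.trans[rotated]) simp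
  qed
  finally have "(\<integral>\<^sup>+\<omega>. (\<Sum>n. ennreal (V n \<omega> * \<phi> (X n \<omega>))) \<partial>M) \<noteq> \<infinity>"
    by (auto simp: top_unique)
  then have "AE \<omega> in M. (\<Sum>n. ennreal (V n \<omega> * \<phi> (X n \<omega>))) \<noteq> \<infinity>"
    by (intro nn_integral_noteq_infinite) simp
  then show ?thesis
  proof eventually_elim
    case (elim \<omega>)
    then have "summable (\<lambda>n. V n \<omega> * \<phi> (X n \<omega>))"
      using nonneg by (intro summable_suminf_not_top) auto
    then show ?case
      by (rule summable_LIMSEQ_zero)
  qed
qed

lemma V_ge_in_history: "k \<le> m \<Longrightarrow> {\<omega>\<in>space M. c \<le> V k \<omega>} \<in> sets (history m)"
  using measurable_sets[OF X_measurable_history, of k m "{u. c \<le> \<bar>u\<bar> powr d}"]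
  by (simp add: vimage_def Int_def conj_commute)

lemma V_le_in_history: "k \<le> m \<Longrightarrow> {\<omega>\<in>space M. V k \<omega> \<le> c} \<in> sets (history m)"
  using measurable_sets[OF X_measurable_history, of k m "{u. \<bar>u\<bar> powr d \<le> c}"]
  by (simp add: vimage_def Int_def conj_commute)

lemma exceeds_in_history:
  "{\<omega>\<in>space M. \<exists>k\<in>{n..<n + j}. c \<le> V k \<omega>} \<in> sets (history (n + j))"
proof -
  have "{\<omega>\<in>space M. \<exists>k\<in>{n..<n + j}. c \<le> V k \<omega>} = (\<Union>k\<in>{n..<n + j}. {\<omega>\<in>space M. c \<le> V k \<omega>})"
    by auto
  also have "\<dots> \<in> sets (history (n + j))"
    by (intro sets.finite_UN V_ge_in_history) auto
  finally show ?thesis .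
qed

lemma set_nn_integral_V_split_above:
  assumes D: "D \<in> sets (history N)"
  shows "ennreal c * emeasure M (D \<inter> {\<omega>\<in>space M. c \<le> V N \<omega>})
      + (\<integral>\<^sup>+\<omega>\<in>D - {\<omega>\<in>space M. c \<le> V N \<omega>}. ennreal (V (Suc N) \<omega>) \<partial>M)
    \<le> (\<integral>\<^sup>+\<omega>\<in>D. ennreal (V N \<omega>) \<partial>M)"
proof -
  define G where "G = {\<omega>\<in>space M. c \<le> V N \<omega>}"
  have G: "G \<in> sets (history N)"
    unfolding G_def by (rule V_ge_in_history) simp
  have D_G: "D \<inter> G \<in> sets (history N)" "D - G \<in> sets (history N)"
    using D G by auto
  then have "D \<inter> G \<in> sets M" "D - G \<in> sets M"
    using sets_history_subset by blast+
  have "ennreal c * emeasure M (D \<inter> G) \<le> (\<integral>\<^sup>+\<omega>\<in>D \<inter> G. ennreal (V N \<omega>) \<partial>M)"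
    using \<open>D \<inter> G \<in> sets M\<close> by (intro emeasure_scaled_le_set_nn_integral) (auto simp: G_def)
  moreover have "(\<integral>\<^sup>+\<omega>\<in>D - G. ennreal (V (Suc N) \<omega>) \<partial>M) \<le> (\<integral>\<^sup>+\<omega>\<in>D - G. ennreal (V N \<omega>) \<partial>M)"
    using D_G(2) by (rule set_nn_integral_V_mono)
  ultimately have "ennreal c * emeasure M (D \<inter> G) + (\<integral>\<^sup>+\<omega>\<in>D - G. ennreal (V (Suc N) \<omega>) \<partial>M)
      \<le> (\<integral>\<^sup>+\<omega>\<in>D \<inter> G. ennreal (V N \<omega>) \<partial>M) + (\<integral>\<^sup>+\<omega>\<in>D - G. ennreal (V N \<omega>) \<partial>M)"
    by (rule add_mono)
  also have "\<dots> = (\<integral>\<^sup>+\<omega>\<in>(D \<inter> G) \<union> (D - G). ennreal (V N \<omega>) \<partial>M)"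
    using \<open>D \<inter> G \<in> sets M\<close> \<open>D - G \<in> sets M\<close> by (intro nn_integral_disjoint_pair[symmetric]) auto
  also have "(D \<inter> G) \<union> (D - G) = D"
    by auto
  finally show ?thesis
    unfolding G_def .
qed

lemma maximal_inequality_finite:
  assumes A: "A \<in> sets (history n)"
  shows "ennreal c * emeasure M (A \<inter> {\<omega>\<in>space M. \<exists>k\<in>{n..<n + j}. c \<le> V k \<omega>})
      + (\<integral>\<^sup>+\<omega>\<in>A - {\<omega>\<in>space M. \<exists>k\<in>{n..<n + j}. c \<le> V k \<omega>}. ennreal (V (n + j) \<omega>) \<partial>M)
    \<le> (\<integral>\<^sup>+\<omega>\<in>A. ennreal (V n \<omega>) \<partial>M)"
proof (induction j)
  case 0
  then show ?case by simp
next
  case (Suc j)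
  define E where "E = {\<omega>\<in>space M. \<exists>k\<in>{n..<n + j}. c \<le> V k \<omega>}"
  define G where "G = {\<omega>\<in>space M. c \<le> V (n + j) \<omega>}"
  have A': "A \<in> sets (history (n + j))"
    using sets_history_mono[of n "n + j"] A by auto
  have E: "E \<in> sets (history (n + j))"
    unfolding E_def by (rule exceeds_in_history)
  have G: "G \<in> sets (history (n + j))"
    unfolding G_def by (rule V_ge_in_history) simp
  have "A \<inter> E \<in> sets M" "(A - E) \<inter> G \<in> sets M"
    using sets.Int[OF A' E] sets.Int[OF sets.Diff[OF A' E] G] sets_history_subset by blast+
  then have "emeasure M ((A \<inter> E) \<union> ((A - E) \<inter> G)) = emeasure M (A \<inter> E) + emeasure M ((A - E) \<inter> G)"
    by (intro plus_emeasure[symmetric]) auto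
  moreover have "A \<inter> (E \<union> G) = (A \<inter> E) \<union> ((A - E) \<inter> G)"
    by auto
  ultimately have measure_split:
    "emeasure M (A \<inter> (E \<union> G)) = emeasure M (A \<inter> E) + emeasure M ((A - E) \<inter> G)"
    by simp
  have E_Suc: "{\<omega>\<in>space M. \<exists>k\<in>{n..<Suc (n + j)}. c \<le> V k \<omega>} = E \<union> G"
    unfolding E_def G_def by (auto simp: atLeastLessThanSuc)
  have "A - (E \<union> G) = (A - E) - G"
    by auto
  then have "ennreal c * emeasure M (A \<inter> (E \<union> G))
      + (\<integral>\<^sup>+\<omega>\<in>A - (E \<union> G). ennreal (V (Suc (n + j)) \<omega>) \<partial>M)
    = ennreal c * emeasure M (A \<inter> E) + (ennreal c * emeasure M ((A - E) \<inter> G)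
      + (\<integral>\<^sup>+\<omega>\<in>(A - E) - G. ennreal (V (Suc (n + j)) \<omega>) \<partial>M))"
    unfolding measure_split by (simp only: distrib_left add.assoc)
  also have "\<dots> \<le> ennreal c * emeasure M (A \<inter> E) + (\<integral>\<^sup>+\<omega>\<in>A - E. ennreal (V (n + j) \<omega>) \<partial>M)"
    using set_nn_integral_V_split_above[OF sets.Diff[OF A' E], of c] unfolding G_def
    by (intro add_left_mono)
  also have "\<dots> \<le> (\<integral>\<^sup>+\<omega>\<in>A. ennreal (V n \<omega>) \<partial>M)"
    using Suc.IH by (simp add: E_def)
  finally show ?case
    unfolding add_Suc_right E_Suc .
qed

lemma maximal_inequality:
  assumes A: "A \<in> sets (history n)"
  shows "ennreal c * emeasure M (A \<inter> {\<omega>\<in>space M. \<exists>k\<ge>n. c \<le> V k \<omega>})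
    \<le> (\<integral>\<^sup>+\<omega>\<in>A. ennreal (V n \<omega>) \<partial>M)"
proof -
  define U where "U j = A \<inter> {\<omega>\<in>space M. \<exists>k\<in>{n..<n + j}. c \<le> V k \<omega>}" for j
  have "U j \<in> sets (history (n + j))" for j
    using sets_history_mono[of n "n + j"] A exceeds_in_history unfolding U_def by (intro sets.Int) auto
  then have "range U \<subseteq> sets M"
    using sets_history_subset by blast
  moreover have "incseq U"
    by (intro incseq_SucI) (auto simp: U_def)
  moreover have "(\<Union>j. U j) = A \<inter> {\<omega>\<in>space M. \<exists>k\<ge>n. c \<le> V k \<omega>}"
  proof (intro equalityI subsetI)
    fix \<omega> assume "\<omega> \<in> A \<inter> {\<omega>\<in>space M. \<exists>k\<ge>n. c \<le> V k \<omega>}"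
    then obtain k where "\<omega> \<in> A" "\<omega> \<in> space M" "n \<le> k" "c \<le> V k \<omega>"
      by auto
    then have "\<omega> \<in> U (Suc (k - n))"
      by (auto simp: U_def)
    then show "\<omega> \<in> (\<Union>j. U j)"
      by blast
  qed (auto simp: U_def)
  ultimately have "ennreal c * emeasure M (A \<inter> {\<omega>\<in>space M. \<exists>k\<ge>n. c \<le> V k \<omega>})
      = (SUP j. ennreal c * emeasure M (U j))"
    by (metis SUP_emeasure_incseq SUP_mult_left_ennreal)
  also have "\<dots> \<le> (\<integral>\<^sup>+\<omega>\<in>A. ennreal (V n \<omega>) \<partial>M)"
  proof (rule SUP_least)
    show "ennreal c * emeasure M (U j) \<le> (\<integral>\<^sup>+\<omega>\<in>A. ennreal (V n \<omega>) \<partial>M)" for j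
      using maximal_inequality_finite[OF A, of c j] unfolding U_def
      by (rule order_trans[rotated]) simp
  qed
  finally show ?thesis .
qed

definition first_below :: "real \<Rightarrow> nat \<Rightarrow> 'a set" where
  "first_below \<eta> m = {\<omega>\<in>space M. V m \<omega> \<le> \<eta> \<and> (\<forall>j<m. \<eta> < V j \<omega>)}"

lemma first_below_in_history: "first_below \<eta> m \<in> sets (history m)"
proof -
  have "first_below \<eta> m = {\<omega>\<in>space M. V m \<omega> \<le> \<eta>} - (\<Union>j<m. {\<omega>\<in>space M. V j \<omega> \<le> \<eta>})"
    by (auto simp: first_below_def not_le)
  also have "\<dots> \<in> sets (history m)"
    by (intro sets.Diff sets.finite_UN V_le_in_history) auto
  finally show ?thesis .
qed

lemma disjoint_family_first_below: "disjoint_family (first_below \<eta>)"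
proof (unfold disjoint_family_on_def, intro ballI impI)
  fix m m' :: nat assume "m \<noteq> m'"
  then show "first_below \<eta> m \<inter> first_below \<eta> m' = {}"
    by (cases m m' rule: linorder_cases) (fastforce simp: first_below_def)+
qed

lemma first_below_cover:
  assumes "\<omega> \<in> space M" "V m \<omega> \<le> \<eta>"
  shows "\<exists>m0\<le>m. \<omega> \<in> first_below \<eta> m0"
proof -
  define m0 where "m0 = (LEAST m. V m \<omega> \<le> \<eta>)"
  have "V m0 \<omega> \<le> \<eta>" "m0 \<le> m" "\<forall>j<m0. \<eta> < V j \<omega>"
    using assms(2) not_less_Least[of _ "\<lambda>m. V m \<omega> \<le> \<eta>"] unfolding m0_def
    by (auto intro: LeastI Least_le simp: not_le)
  then show ?thesis
    using assms(1) by (auto simp: first_below_def)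
qed

lemma emeasure_return_above_le:
  "ennreal c * emeasure M {\<omega>\<in>space M. \<exists>m. V m \<omega> \<le> \<eta> \<and> (\<exists>k\<ge>m. c \<le> V k \<omega>)} \<le> ennreal \<eta>"
proof -
  define C where "C m = first_below \<eta> m \<inter> {\<omega>\<in>space M. \<exists>k\<ge>m. c \<le> V k \<omega>}" for m
  have A_sets: "range (first_below \<eta>) \<subseteq> sets M"
    using first_below_in_history sets_history_subset by blast
  then have C_sets: "range C \<subseteq> sets M"
    by (auto simp: C_def)
  have "{\<omega>\<in>space M. \<exists>m. V m \<omega> \<le> \<eta> \<and> (\<exists>k\<ge>m. c \<le> V k \<omega>)} \<subseteq> (\<Union>m. C m)"
  proof
    fix \<omega> assume "\<omega> \<in> {\<omega>\<in>space M. \<exists>m. V m \<omega> \<le> \<eta> \<and> (\<exists>k\<ge>m. c \<le> V k \<omega>)}"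
    then obtain m k where \<omega>: "\<omega> \<in> space M" "V m \<omega> \<le> \<eta>" "m \<le> k" "c \<le> V k \<omega>"
      by auto
    moreover obtain m0 where "m0 \<le> m" "\<omega> \<in> first_below \<eta> m0"
      using first_below_cover[OF \<omega>(1,2)] by blast
    ultimately have "\<omega> \<in> C m0"
      by (auto simp: C_def intro!: exI[of _ k])
    then show "\<omega> \<in> (\<Union>m. C m)"
      by blast
  qed
  then have "ennreal c * emeasure M {\<omega>\<in>space M. \<exists>m. V m \<omega> \<le> \<eta> \<and> (\<exists>k\<ge>m. c \<le> V k \<omega>)}
      \<le> ennreal c * emeasure M (\<Union>m. C m)"
    using C_sets by (intro mult_left_mono emeasure_mono) auto
  also have "\<dots> \<le> (\<Sum>m. ennreal c * emeasure M (C m))"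
    using C_sets mult_left_mono[OF emeasure_subadditive_countably[of C M], of "ennreal c"] by auto
  also have "\<dots> \<le> (\<Sum>m. ennreal \<eta> * emeasure M (first_below \<eta> m))"
  proof (intro suminf_le summableI)
    show "ennreal c * emeasure M (C m) \<le> ennreal \<eta> * emeasure M (first_below \<eta> m)" for m
    proof -
      have "ennreal c * emeasure M (C m) \<le> (\<integral>\<^sup>+\<omega>\<in>first_below \<eta> m. ennreal (V m \<omega>) \<partial>M)"
        unfolding C_def by (rule maximal_inequality[OF first_below_in_history])
      also have "\<dots> \<le> (\<integral>\<^sup>+\<omega>. ennreal \<eta> * indicator (first_below \<eta> m) \<omega> \<partial>M)"
        by (intro nn_integral_mono) (auto simp: indicator_def first_below_def intro: ennreal_leI)
      also have "\<dots> = ennreal \<eta> * emeasure M (first_below \<eta> m)"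
        using A_sets by (simp add: nn_integral_cmult_indicator)
      finally show ?thesis .
    qed
  qed
  also have "\<dots> = ennreal \<eta> * emeasure M (\<Union>m. first_below \<eta> m)"
    using A_sets disjoint_family_first_below by (simp add: suminf_emeasure ennreal_suminf_cmult)
  also have "\<dots> \<le> ennreal \<eta>"
    using mult_left_mono[OF emeasure_le_1[of "\<Union>m. first_below \<eta> m"], of "ennreal \<eta>"] by simp
  finally show ?thesis .
qed

lemma AE_V_bounded: "AE \<omega> in M. \<exists>K. \<forall>k. V k \<omega> \<le> K"
proof (rule AE_if_exceptions_small)
  fix e :: real assume "0 < e"
  define c where "c = (\<bar>x0\<bar> powr d + 1) / e"
  define S where "S = {\<omega>\<in>space M. \<exists>k. c \<le> V k \<omega>}"
  have "0 < c"
    using \<open>0 < e\<close> by (simp add: c_def add_nonneg_pos)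
  have "ennreal c * emeasure M S \<le> (\<integral>\<^sup>+\<omega>\<in>space M. ennreal (V 0 \<omega>) \<partial>M)"
    using maximal_inequality[OF space_in_history, of c 0] by (simp add: S_def)
  also have "\<dots> = ennreal (\<bar>x0\<bar> powr d)"
    by (simp add: emeasure_space_1)
  finally have "measure M S \<le> \<bar>x0\<bar> powr d / c"
    using \<open>0 < c\<close> by (intro measure_le_of_scaled_emeasure_le) auto
  also have "\<dots> = e * (\<bar>x0\<bar> powr d / (\<bar>x0\<bar> powr d + 1))"
    by (simp add: c_def)
  also have "\<dots> \<le> e * 1"
  proof -
    have "0 < \<bar>x0\<bar> powr d + 1"
      using powr_ge_zero[of "\<bar>x0\<bar>" d] by linarith
    then have "\<bar>x0\<bar> powr d / (\<bar>x0\<bar> powr d + 1) \<le> 1"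
      by (simp add: divide_le_eq)
    then show ?thesis
      using \<open>0 < e\<close> by (intro mult_left_mono) auto
  qed
  finally have "measure M S \<le> e"
    by simp
  moreover have "{\<omega>\<in>space M. \<not> (\<exists>K. \<forall>k. V k \<omega> \<le> K)} \<subseteq> S"
    by (auto simp: S_def not_le intro: less_imp_le)
  moreover have "S \<in> sets M"
    unfolding S_def by measurable
  ultimately show "\<exists>S\<in>sets M. {\<omega>\<in>space M. \<not> (\<exists>K. \<forall>k. V k \<omega> \<le> K)} \<subseteq> S \<and> measure M S \<le> e"
    by blast
qed

lemma AE_V_trapped_below:
  assumes "0 < c"
  shows "AE \<omega> in M. \<exists>\<eta>>0. \<forall>m. V m \<omega> \<le> \<eta> \<longrightarrow> (\<forall>k\<ge>m. V k \<omega> < c)"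
proof (rule AE_if_exceptions_small)
  fix e :: real assume "0 < e"
  obtain i where i: "inverse (real (Suc i)) < e * c"
    using reals_Archimedean \<open>0 < e\<close> \<open>0 < c\<close> by (metis mult_pos_pos)
  define \<eta> where "\<eta> = inverse (real (Suc i))"
  have "0 < \<eta>"
    by (simp add: \<eta>_def)
  define S where "S = {\<omega>\<in>space M. \<exists>m. V m \<omega> \<le> \<eta> \<and> (\<exists>k\<ge>m. c \<le> V k \<omega>)}"
  have "measure M S \<le> \<eta> / c"
    using emeasure_return_above_le[of c \<eta>] \<open>0 < c\<close> \<open>0 < \<eta>\<close>
    by (intro measure_le_of_scaled_emeasure_le) (auto simp: S_def)
  also have "\<dots> \<le> e"
    using i \<open>0 < c\<close> by (simp add: \<eta>_def pos_divide_le_eq)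
  finally have "measure M S \<le> e" .
  moreover have "{\<omega>\<in>space M. \<not> (\<exists>\<eta>>0. \<forall>m. V m \<omega> \<le> \<eta> \<longrightarrow> (\<forall>k\<ge>m. V k \<omega> < c))} \<subseteq> S"
  proof
    fix \<omega> assume "\<omega> \<in> {\<omega>\<in>space M. \<not> (\<exists>\<eta>>0. \<forall>m. V m \<omega> \<le> \<eta> \<longrightarrow> (\<forall>k\<ge>m. V k \<omega> < c))}"
    then have "\<omega> \<in> space M" "\<not> (\<forall>m. V m \<omega> \<le> \<eta> \<longrightarrow> (\<forall>k\<ge>m. V k \<omega> < c))"
      using \<open>0 < \<eta>\<close> by blast+
    then show "\<omega> \<in> S"
      by (auto simp: S_def not_less)
  qed
  moreover have "S \<in> sets M"
    unfolding S_def by measurable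
  ultimately show "\<exists>S\<in>sets M.
      {\<omega>\<in>space M. \<not> (\<exists>\<eta>>0. \<forall>m. V m \<omega> \<le> \<eta> \<longrightarrow> (\<forall>k\<ge>m. V k \<omega> < c))} \<subseteq> S \<and> measure M S \<le> e"
    by blast
qed

lemma AE_V_trapped:
  "AE \<omega> in M. \<forall>c>0. \<exists>\<eta>>0. \<forall>m. V m \<omega> \<le> \<eta> \<longrightarrow> (\<forall>k\<ge>m. V k \<omega> < c)"
proof -
  have "AE \<omega> in M. \<forall>j. \<exists>\<eta>>0. \<forall>m. V m \<omega> \<le> \<eta> \<longrightarrow> (\<forall>k\<ge>m. V k \<omega> < inverse (real (Suc j)))"
    by (subst AE_all_countable) (simp add: AE_V_trapped_below)
  then show ?thesis
  proof eventually_elim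
    case (elim \<omega>)
    show ?case
    proof (intro allI impI)
      fix c :: real assume "0 < c"
      then obtain j where "inverse (real (Suc j)) < c"
        using reals_Archimedean by blast
      then show "\<exists>\<eta>>0. \<forall>m. V m \<omega> \<le> \<eta> \<longrightarrow> (\<forall>k\<ge>m. V k \<omega> < c)"
        using elim[rule_format, of j] by (meson order.strict_trans)
    qed
  qed
qed

theorem AE_X_tendsto_zero: "AE \<omega> in M. (\<lambda>n. X n \<omega>) \<longlonglongrightarrow> 0"
  using AE_decrement_tendsto_zero AE_V_bounded AE_V_trapped
proof eventually_elim
  case (elim \<omega>)
  obtain K where K: "\<And>k. V k \<omega> \<le> K"
    using elim(2) by blast
  have "continuous_on UNIV (\<lambda>t. \<bar>t\<bar> powr d * \<phi> t)"
    using d_pos \<phi>_cont by (intro continuous_intros continuous_on_powr') auto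
  then have "\<exists>m. V m \<omega> \<le> \<eta>" if "0 < \<eta>" for \<eta>
    using elim(1) K that \<phi>_pos d_pos by (intro exists_powr_abs_le_if_tendsto_zero) auto
  then have "(\<lambda>n. V n \<omega>) \<longlonglongrightarrow> 0"
    using elim(3) by (intro tendsto_zero_if_small_values_trapped) auto
  then show ?case
    by (rule tendsto_zero_if_powr_abs_tendsto_zero[OF d_pos])
qed

end

lemma sup_condition_drift_le:
  fixes a b \<beta> :: real
  assumes "if b = 0 then a < 0 else 2 * a / b\<^sup>2 \<le> \<beta>"
  shows "a \<le> max \<beta> 0 * b\<^sup>2 / 2"
proof (cases "b = 0")
  case False
  then have "2 * a \<le> \<beta> * b\<^sup>2"
    using assms by (simp add: divide_le_eq)
  moreover have "\<beta> * b\<^sup>2 \<le> max \<beta> 0 * b\<^sup>2"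
    by (intro mult_right_mono) auto
  ultimately show ?thesis
    by simp
qed (use assms in simp)

lemma sup_condition_nondegenerate:
  fixes a b \<beta> :: real
  assumes "if b = 0 then a < 0 else 2 * a / b\<^sup>2 \<le> \<beta>"
  shows "0 < \<bar>a\<bar> + b\<^sup>2"
  using assms by (cases "b = 0") (auto simp: add_nonneg_pos)

lemma (in prob_space) euler_step_powr_lyapunov_recursion:
  fixes \<xi> :: "nat \<Rightarrow> 'a \<Rightarrow> real" and f g :: "real \<Rightarrow> real"
  assumes indep: "indep_vars (\<lambda>_. borel) \<xi> {1..}"
    and int: "\<And>n. 1 \<le> n \<Longrightarrow> integrable M (\<xi> n)" "\<And>n. 1 \<le> n \<Longrightarrow> integrable M (\<lambda>\<omega>. (\<xi> n \<omega>)\<^sup>2)"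
      "\<And>n. 1 \<le> n \<Longrightarrow> integrable M (\<lambda>\<omega>. \<bar>\<xi> n \<omega>\<bar> ^ 3)"
    and mean: "\<And>n. 1 \<le> n \<Longrightarrow> expectation (\<xi> n) = 0"
    and var: "\<And>n. 1 \<le> n \<Longrightarrow> expectation (\<lambda>\<omega>. (\<xi> n \<omega>)\<^sup>2) = 1"
    and moment3: "\<And>n. 1 \<le> n \<Longrightarrow> expectation (\<lambda>\<omega>. \<bar>\<xi> n \<omega>\<bar> ^ 3) \<le> K" and K: "1 \<le> K"
    and f: "continuous_on UNIV f" "\<And>u. \<bar>f u\<bar> \<le> 1"
    and g: "continuous_on UNIV g" "\<And>u. \<bar>g u\<bar> \<le> 1"
    and \<delta>: "0 < \<delta>" "\<delta> \<le> 1/2"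
    and drift: "\<And>u. u \<noteq> 0 \<Longrightarrow> f u \<le> (1 - 2 * \<delta>) * (g u)\<^sup>2 / 2"
    and nondegenerate: "\<And>u. u \<noteq> 0 \<Longrightarrow> 0 < \<bar>f u\<bar> + (g u)\<^sup>2"
    and h: "0 < h" "sqrt h \<le> \<delta>\<^sup>2 / (288 * K)"
  shows "powr_lyapunov_recursion M \<xi> (\<lambda>u t. 1 + h * f u + sqrt h * g u * t) \<delta>
    (\<lambda>u. h * \<delta>\<^sup>2 / 6 * (\<bar>f u\<bar> + (g u)\<^sup>2))"
proof unfold_locales
  have [measurable]: "f \<in> borel_measurable borel" "g \<in> borel_measurable borel"
    using f g by (auto intro: borel_measurable_continuous_onI)
  show "(\<lambda>(u, t). 1 + h * f u + sqrt h * g u * t) \<in> borel_measurable (borel \<Otimes>\<^sub>M borel)"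
    by measurable
  show "continuous_on UNIV (\<lambda>u. h * \<delta>\<^sup>2 / 6 * (\<bar>f u\<bar> + (g u)\<^sup>2))"
    using f g by (intro continuous_intros)
  show "0 < h * \<delta>\<^sup>2 / 6 * (\<bar>f u\<bar> + (g u)\<^sup>2)" if "u \<noteq> 0" for u
    using h \<delta> nondegenerate[OF that] by simp
  show "(\<integral>\<^sup>+\<omega>. ennreal (\<bar>1 + h * f u + sqrt h * g u * \<xi> n \<omega>\<bar> powr \<delta>) \<partial>M)
      + ennreal (h * \<delta>\<^sup>2 / 6 * (\<bar>f u\<bar> + (g u)\<^sup>2)) \<le> 1" if "1 \<le> n" "u \<noteq> 0" for n u
    using nn_integral_step_factor_powr_decrement[OF int[OF that(1)] mean[OF that(1)] var[OF that(1)]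
        moment3[OF that(1)] K \<delta> f(2) g(2) drift[OF that(2)] h]
    by simp
qed (use indep \<delta> in auto)

theorem theorem2:
  fixes M :: "'a measure" and \<xi> :: "nat \<Rightarrow> 'a \<Rightarrow> real"
    and p :: "nat \<Rightarrow> real \<Rightarrow> real" and f g :: "real \<Rightarrow> real"
  assumes "prob_space M"
    and indep: "prob_space.indep_vars M (\<lambda>_. borel) \<xi> {1..}"
    and rv: "\<And>n. n \<ge> 1 \<Longrightarrow> \<xi> n \<in> borel_measurable M"
    and int1: "\<And>n. n \<ge> 1 \<Longrightarrow> integrable M (\<xi> n)"
    and mean0: "\<And>n. n \<ge> 1 \<Longrightarrow> (\<integral>\<omega>. \<xi> n \<omega> \<partial>M) = 0"
    and int2: "\<And>n. n \<ge> 1 \<Longrightarrow> integrable M (\<lambda>\<omega>. (\<xi> n \<omega>)\<^sup>2)"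
    and var1: "\<And>n. n \<ge> 1 \<Longrightarrow> (\<integral>\<omega>. (\<xi> n \<omega>)\<^sup>2 \<partial>M) = 1"
    and int3: "\<And>n. n \<ge> 1 \<Longrightarrow> integrable M (\<lambda>\<omega>. \<bar>\<xi> n \<omega>\<bar> ^ 3)"
    and mom3: "\<exists>C. \<forall>n\<ge>1. (\<integral>\<omega>. \<bar>\<xi> n \<omega>\<bar> ^ 3 \<partial>M) \<le> C"
    and dens_nonneg: "\<And>n x. n \<ge> 1 \<Longrightarrow> p n x \<ge> 0"
    and dens: "\<And>n. n \<ge> 1 \<Longrightarrow> distributed M lborel (\<xi> n) (\<lambda>x. ennreal (p n x))"
    and tail: "\<forall>\<epsilon>>0. \<exists>R. \<forall>n\<ge>1. \<forall>x. \<bar>x\<bar> > R \<longrightarrow> \<bar>x ^ 3 * p n x\<bar> < \<epsilon>"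
    and contf: "continuous_on UNIV f" and contg: "continuous_on UNIV g"
    and fbd: "\<And>u. \<bar>f u\<bar> \<le> 1" and gbd: "\<And>u. \<bar>g u\<bar> \<le> 1"
    and sup_cond: "\<exists>\<beta><1. \<forall>u. u \<noteq> 0 \<longrightarrow>
        (if g u = 0 then f u < 0 else 2 * f u / (g u)\<^sup>2 \<le> \<beta>)"
  shows "\<exists>h0>0. \<forall>h. 0 < h \<and> h < h0 \<longrightarrow> (\<forall>x0::real.
           AE \<omega> in M. (\<lambda>n. xseq f g \<xi> h x0 n \<omega>) \<longlonglongrightarrow> 0)"
proof -
  interpret prob_space M by fact
  obtain \<beta> where "\<beta> < 1" and cond: "\<And>u. u \<noteq> 0 \<Longrightarrow> (if g u = 0 then f u < 0 else 2 * f u / (g u)\<^sup>2 \<le> \<beta>)"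
    using sup_cond by blast
  obtain C where C: "\<And>n. 1 \<le> n \<Longrightarrow> expectation (\<lambda>\<omega>. \<bar>\<xi> n \<omega>\<bar> ^ 3) \<le> C"
    using mom3 by blast
  define b where "b = max \<beta> 0"
  define \<delta> where "\<delta> = (1 - b) / 2"
  define K where "K = max C 1"
  have \<delta>: "0 < \<delta>" "\<delta> \<le> 1/2" "1 - 2 * \<delta> = b"
    using \<open>\<beta> < 1\<close> by (auto simp: \<delta>_def b_def field_simps)
  have K: "1 \<le> K" "\<And>n. 1 \<le> n \<Longrightarrow> expectation (\<lambda>\<omega>. \<bar>\<xi> n \<omega>\<bar> ^ 3) \<le> K"
    using C by (auto simp: K_def intro: order_trans[OF C])
  have drift: "f u \<le> (1 - 2 * \<delta>) * (g u)\<^sup>2 / 2" if "u \<noteq> 0" for u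
    using sup_condition_drift_le[OF cond[OF that]] \<delta>(3) by (simp add: b_def)
  note nondegenerate = sup_condition_nondegenerate[OF cond]
  show ?thesis
  proof (intro exI[of _ "(\<delta>\<^sup>2 / (288 * K))\<^sup>2"] conjI allI impI)
    show "0 < (\<delta>\<^sup>2 / (288 * K))\<^sup>2"
      using \<delta> K by simp
    fix h x0 :: real assume h: "0 < h \<and> h < (\<delta>\<^sup>2 / (288 * K))\<^sup>2"
    then have "sqrt h \<le> \<delta>\<^sup>2 / (288 * K)"
      using K by (intro real_le_lsqrt) auto
    then interpret powr_lyapunov_recursion M \<xi> "\<lambda>u t. 1 + h * f u + sqrt h * g u * t" \<delta>
      "\<lambda>u. h * \<delta>\<^sup>2 / 6 * (\<bar>f u\<bar> + (g u)\<^sup>2)" x0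
      using h by (intro euler_step_powr_lyapunov_recursion[OF indep int1 int2 int3 mean0 var1 K(2,1)
          contf fbd contg gbd \<delta>(1,2) drift nondegenerate]) auto
    show "AE \<omega> in M. (\<lambda>n. xseq f g \<xi> h x0 n \<omega>) \<longlonglongrightarrow> 0"
      using AE_X_tendsto_zero by (simp add: xseq_eq_mult_recursion)
  qed
qed

end
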